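(* Let $\mathbb A$ be a unital associative algebra over a field of characteristic zero and $X,Y\in\mathbb A$. Then in $\mathbb A[[t]]$ $$e^{tX}e^{tY}=1_{\mathbb A}+\sum_{r=1}^\infty\sum_{n_1,\dots,n_r=1}^\infty\frac{1}{n_r(n_r+n_{r-1})\cdots(n_r+\cdots+n_1)}\,D_{n_1}\cdots D_{n_r},$$ where $D_n=\frac{t^n}{(n-1)!}\mathrm{ad}_X^{n-1}(X+Y)$ for each $n\ge1$.
   Context: $\mathrm{ad}_AB=AB-BA$; the sum converges $t$-adically since $D_n\in t^n\mathbb A$. *)

theory Defs
  imports Main "HOL-Computational_Algebra.Formal_Power_Series"
begin

definition algebra_over :: "('k::field \<Rightarrow> 'a::ring_1 \<Rightarrow> 'a) \<Rightarrow> bool" where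
  "algebra_over scale \<longleftrightarrow> module scale \<and>
     (\<forall>c x y. scale c (x * y) = scale c x * y \<and> scale c (x * y) = x * scale c y)"

definition ad :: "'a::ring \<Rightarrow> 'a \<Rightarrow> 'a" where
  "ad A B = A * B - B * A"

definition fps_scale :: "('k \<Rightarrow> 'a \<Rightarrow> 'a) \<Rightarrow> 'k \<Rightarrow> 'a fps \<Rightarrow> 'a fps" where
  "fps_scale scale c P = Abs_fps (\<lambda>n. scale c (fps_nth P n))"

definition fps_exp_alg :: "('k::field \<Rightarrow> 'a::ring_1 \<Rightarrow> 'a) \<Rightarrow> 'a \<Rightarrow> 'a fps" where
  "fps_exp_alg scale X = Abs_fps (\<lambda>n. scale (1 / of_nat (fact n)) (X ^ n))"

definition Dterm :: "('k::field \<Rightarrow> 'a::ring_1 \<Rightarrow> 'a) \<Rightarrow> 'a \<Rightarrow> 'a \<Rightarrow> nat \<Rightarrow> 'a fps" where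
  "Dterm scale X Y n =
     fps_const (scale (1 / of_nat (fact (n - 1))) ((ad X ^^ (n - 1)) (X + Y))) * fps_X ^ n"

definition tadic_summable :: "('i \<Rightarrow> 'a::zero fps) \<Rightarrow> 'i set \<Rightarrow> bool" where
  "tadic_summable F I \<longleftrightarrow> (\<forall>N. finite {i \<in> I. fps_nth (F i) N \<noteq> 0})"

definition tadic_sum :: "('i \<Rightarrow> 'a::comm_monoid_add fps) \<Rightarrow> 'i set \<Rightarrow> 'a fps" where
  "tadic_sum F I = Abs_fps (\<lambda>N. \<Sum>i\<in>{i \<in> I. fps_nth (F i) N \<noteq> 0}. fps_nth (F i) N)"

definition pos_tuples :: "nat list set" where
  "pos_tuples = {ns. ns \<noteq> [] \<and> (\<forall>n\<in>set ns. 1 \<le> n)}"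

text \<open>n_r (n_r + n_{r-1}) ... (n_r + ... + n_1) = product of the suffix sums.\<close>
definition suffix_denom :: "nat list \<Rightarrow> nat" where
  "suffix_denom ns = (\<Prod>j<length ns. sum_list (drop j ns))"

definition bch_term :: "('k::field \<Rightarrow> 'a::ring_1 \<Rightarrow> 'a) \<Rightarrow> 'a \<Rightarrow> 'a \<Rightarrow> nat list \<Rightarrow> 'a fps" where
  "bch_term scale X Y ns =
     fps_scale scale (1 / of_nat (suffix_denom ns)) (prod_list (map (Dterm scale X Y) ns))"

end

theory Submission imports Defs begin

(* Write E_X = e^{tX} and F = E_X E_Y. Then F' = E_X (X + Y) E_Y = B F, where
   B = E_X (X + Y) E_X^{-1} = sum_k t^k/k! ad_X^k (X + Y); so t F' = (sum_n D_n) F.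
   Comparing coefficients of t^N gives N f_N = sum_{n=1..N} d_n f_{N-n} with f_0 = 1,
   where D_n = d_n t^n. This recursion has a unique solution, and the sum over
   compositions (n_1, ..., n_r) of N in the theorem satisfies it: splitting off n_1,
   the first factor n_1 + ... + n_r of the denominator is N. *)

unbundle fps_syntax

lemma tadic_summableI:
  assumes "\<And>N. {i \<in> I. F i $ N \<noteq> 0} \<subseteq> S N" and "\<And>N. finite (S N)"
  shows "tadic_summable F I"
  unfolding tadic_summable_def using assms by (meson finite_subset)

lemma fps_nth_tadic_sum:
  assumes "finite S" and "\<And>i. i \<in> I \<Longrightarrow> F i $ N \<noteq> 0 \<Longrightarrow> i \<in> S"
  shows "tadic_sum F I $ N = (\<Sum>i\<in>I \<inter> S. F i $ N)"
  unfolding tadic_sum_def using assms by (auto intro: sum.mono_neutral_left)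

lemma prod_list_map_monomial:
  fixes a :: "nat \<Rightarrow> 'a::ring_1"
  shows "prod_list (map (\<lambda>n. fps_const (a n) * fps_X ^ n) ns)
           = fps_const (prod_list (map a ns)) * fps_X ^ sum_list ns"
proof (induction ns)
  case Nil
  then show ?case by simp
next
  case (Cons n ns)
  have "fps_X ^ n * fps_const (prod_list (map a ns)) = fps_const (prod_list (map a ns)) * fps_X ^ n"
    by (rule fps_mult_fps_X_power_commute)
  with Cons show ?case
    by (simp add: power_add mult.assoc) (simp flip: mult.assoc)
qed

definition compositions :: "nat \<Rightarrow> nat list set" where
  "compositions N = {ns. (\<forall>n\<in>set ns. 1 \<le> n) \<and> sum_list ns = N}"

lemma length_le_sum_list: "\<forall>n\<in>set ns. 1 \<le> n \<Longrightarrow> length ns \<le> sum_list (ns::nat list)"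
  by (induction ns) auto

lemma finite_compositions: "finite (compositions N)"
proof (rule finite_subset)
  show "compositions N \<subseteq> {ns. set ns \<subseteq> {0..N} \<and> length ns \<le> N}"
    unfolding compositions_def using length_le_sum_list member_le_sum_list by fastforce
  show "finite {ns. set ns \<subseteq> {0..N} \<and> length ns \<le> N}"
    by (rule finite_lists_length_le) simp
qed

lemma compositions_0: "compositions 0 = {[]}"
proof -
  have "ns = []" if "\<forall>n\<in>set ns. 1 \<le> n" and "sum_list ns = 0" for ns :: "nat list"
    using length_le_sum_list[OF that(1)] that(2) by simp
  then show ?thesis
    unfolding compositions_def by auto
qed

lemma compositions_eq_UN_Cons:
  assumes "N \<noteq> 0"
  shows "compositions N = (\<Union>n\<in>{1..N}. Cons n ` compositions (N - n))"
proof
  show "compositions N \<subseteq> (\<Union>n\<in>{1..N}. Cons n ` compositions (N - n))"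
  proof
    fix ns assume ns: "ns \<in> compositions N"
    with assms obtain n r where ns_eq: "ns = n # r"
      unfolding compositions_def by (cases ns) auto
    with ns have "n \<in> {1..N}" and "r \<in> compositions (N - n)"
      unfolding compositions_def by auto
    with ns_eq show "ns \<in> (\<Union>n\<in>{1..N}. Cons n ` compositions (N - n))"
      by blast
  qed
  show "(\<Union>n\<in>{1..N}. Cons n ` compositions (N - n)) \<subseteq> compositions N"
    unfolding compositions_def by auto
qed

lemma pos_tuples_Int_compositions:
  "pos_tuples \<inter> compositions N = (if N = 0 then {} else compositions N)"
  using compositions_0 by (auto simp: pos_tuples_def compositions_def)

lemma suffix_denom_Cons: "suffix_denom (n # ns) = (n + sum_list ns) * suffix_denom ns"
  unfolding suffix_denom_def length_Cons prod.lessThan_Suc_shift by simp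

locale scalar_algebra =
  fixes scale :: "'k::field_char_0 \<Rightarrow> 'a::ring_1 \<Rightarrow> 'a"
  assumes algebra: "algebra_over scale"
begin

(* c \<mapsto> scale c 1 embeds k into the centre of the algebra, and scale c is multiplication
   by this central element. *)
definition scalar :: "'k \<Rightarrow> 'a" where
  "scalar c = scale c 1"

lemma module_scale: "module scale"
  using algebra unfolding algebra_over_def by blast

lemma scale_eq_scalar_mult: "scale c x = scalar c * x"
  using algebra unfolding algebra_over_def scalar_def by (metis mult_1)

lemma scale_eq_mult_scalar: "scale c x = x * scalar c"
  using algebra unfolding algebra_over_def scalar_def by (metis mult_1_right)

lemma scalar_commute: "scalar c * x = x * scalar c"
  using scale_eq_scalar_mult scale_eq_mult_scalar by metis

lemma scalar_mult: "scalar (b * c) = scalar b * scalar c"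
  unfolding scalar_def module.scale_scale[OF module_scale, symmetric]
  by (rule scale_eq_scalar_mult[unfolded scalar_def])

lemma scalar_one: "scalar 1 = 1"
  unfolding scalar_def by (rule module.scale_one[OF module_scale])

lemma scalar_of_nat: "scalar (of_nat n) = of_nat n"
  unfolding scalar_def
  by (induction n) (simp_all add: module.scale_left_distrib[OF module_scale]
      module.scale_zero_left[OF module_scale] module.scale_one[OF module_scale])

lemma of_nat_mult_scalar_inverse: "n \<noteq> 0 \<Longrightarrow> of_nat n * scalar (1 / of_nat n) = 1"
  by (simp flip: scalar_of_nat scalar_mult add: scalar_one)

lemma of_nat_mult_left_cancel:
  fixes x y :: 'a
  assumes "n \<noteq> 0" "of_nat n * x = of_nat n * y"
  shows "x = y"
proof -
  have "x = scalar (1 / of_nat n) * (of_nat n * x)"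
    using of_nat_mult_scalar_inverse[OF assms(1)] by (simp add: scalar_commute flip: mult.assoc)
  also have "\<dots> = y"
    using of_nat_mult_scalar_inverse[OF assms(1)] by (simp add: assms(2) scalar_commute flip: mult.assoc)
  finally show ?thesis .
qed

lemma of_nat_Suc_mult_scalar_inverse_fact:
  "of_nat (Suc k) * scalar (1 / fact (Suc k)) = scalar (1 / fact k)"
proof -
  have "of_nat (Suc k) * (1 / fact (Suc k)) = (1 / fact k :: 'k)"
    by (simp add: field_simps del: of_nat_Suc)
  then show ?thesis
    by (simp flip: scalar_of_nat scalar_mult del: of_nat_Suc)
qed

lemma fps_nth_exp_alg: "fps_exp_alg scale X $ n = scalar (1 / fact n) * X ^ n"
  unfolding fps_exp_alg_def by (simp add: scale_eq_scalar_mult)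

lemma fps_deriv_exp_alg: "fps_deriv (fps_exp_alg scale X) = fps_const X * fps_exp_alg scale X"
proof (rule fps_ext)
  fix n
  have "of_nat (Suc n) * (scalar (1 / fact (Suc n)) * X ^ Suc n) = scalar (1 / fact n) * (X * X ^ n)"
    by (simp only: mult.assoc[symmetric] of_nat_Suc_mult_scalar_inverse_fact power_Suc)
  also have "\<dots> = X * (scalar (1 / fact n) * X ^ n)"
    by (metis mult.assoc scalar_commute)
  finally show "fps_deriv (fps_exp_alg scale X) $ n = (fps_const X * fps_exp_alg scale X) $ n"
    by (simp add: fps_nth_exp_alg del: of_nat_Suc)
qed

lemma fps_const_mult_exp_alg_commute:
  "fps_const X * fps_exp_alg scale X = fps_exp_alg scale X * fps_const X"
  by (rule fps_ext) (simp add: fps_nth_exp_alg, metis mult.assoc scalar_commute power_commutes)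

lemma fps_deriv_eq_const_mult_imp_eq_0:
  fixes G :: "'a fps"
  assumes "fps_deriv G = fps_const A * G" and "G $ 0 = 0"
  shows "G = 0"
proof (rule fps_ext)
  fix n show "G $ n = 0 $ n"
  proof (induction n)
    case 0
    then show ?case using assms(2) by simp
  next
    case (Suc n)
    have "of_nat (Suc n) * G $ Suc n = A * G $ n"
      using arg_cong[OF assms(1), of "\<lambda>F. F $ n"] by simp
    also have "\<dots> = of_nat (Suc n) * 0"
      using Suc by simp
    finally show ?case
      by (simp add: of_nat_mult_left_cancel[OF Suc_not_Zero])
  qed
qed

definition ad_exp_coeff :: "'a \<Rightarrow> 'a \<Rightarrow> nat \<Rightarrow> 'a" where
  "ad_exp_coeff X Z k = scalar (1 / fact k) * (ad X ^^ k) Z"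

(* e^{tX} Z e^{-tX} *)
definition ad_exp_series :: "'a \<Rightarrow> 'a \<Rightarrow> 'a fps" where
  "ad_exp_series X Z = Abs_fps (ad_exp_coeff X Z)"

lemma fps_deriv_ad_exp_series:
  "fps_deriv (ad_exp_series X Z) = fps_const X * ad_exp_series X Z - ad_exp_series X Z * fps_const X"
proof (rule fps_ext)
  fix k
  define W where "W = (ad X ^^ k) Z"
  have "of_nat (Suc k) * ad_exp_coeff X Z (Suc k)
      = (of_nat (Suc k) * scalar (1 / fact (Suc k))) * (X * W - W * X)"
    by (simp add: ad_exp_coeff_def mult.assoc W_def ad_def del: of_nat_Suc)
  also have "\<dots> = X * (scalar (1 / fact k) * W) - (scalar (1 / fact k) * W) * X"
    by (simp only: of_nat_Suc_mult_scalar_inverse_fact right_diff_distrib) (metis mult.assoc scalar_commute)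
  finally show "fps_deriv (ad_exp_series X Z) $ k
      = (fps_const X * ad_exp_series X Z - ad_exp_series X Z * fps_const X) $ k"
    by (simp add: ad_exp_series_def ad_exp_coeff_def W_def del: of_nat_Suc)
qed

(* The difference G of the two sides satisfies G' = X G and G(0) = 0. *)
lemma ad_exp_series_mult_exp_alg:
  "ad_exp_series X Z * fps_exp_alg scale X = fps_exp_alg scale X * fps_const Z"
proof -
  let ?E = "fps_exp_alg scale X" and ?B = "ad_exp_series X Z"
  define G where "G = ?B * ?E - ?E * fps_const Z"
  have "fps_deriv G = (fps_const X * ?B - ?B * fps_const X) * ?E + ?B * (?E * fps_const X)
        - (fps_const X * ?E) * fps_const Z"
    unfolding G_def by (simp add: fps_deriv_ad_exp_series fps_deriv_exp_alg fps_const_mult_exp_alg_commute)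
  also have "\<dots> = fps_const X * G"
    unfolding G_def by (simp add: algebra_simps flip: fps_const_mult_exp_alg_commute)
  finally have "G = 0"
    by (rule fps_deriv_eq_const_mult_imp_eq_0)
       (simp add: G_def ad_exp_series_def ad_exp_coeff_def fps_nth_exp_alg scalar_one)
  then show ?thesis unfolding G_def by simp
qed

lemma fps_deriv_exp_alg_mult:
  "fps_deriv (fps_exp_alg scale X * fps_exp_alg scale Y)
     = ad_exp_series X (X + Y) * (fps_exp_alg scale X * fps_exp_alg scale Y)"
proof -
  let ?EX = "fps_exp_alg scale X" and ?EY = "fps_exp_alg scale Y"
  have "fps_deriv (?EX * ?EY) = (?EX * fps_const X) * ?EY + ?EX * (fps_const Y * ?EY)"
    by (simp add: fps_deriv_exp_alg fps_const_mult_exp_alg_commute)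
  also have "\<dots> = (?EX * fps_const (X + Y)) * ?EY"
    by (simp add: algebra_simps flip: fps_const_add)
  also have "\<dots> = ad_exp_series X (X + Y) * (?EX * ?EY)"
    by (simp add: mult.assoc flip: ad_exp_series_mult_exp_alg)
  finally show ?thesis .
qed

definition composition_term :: "(nat \<Rightarrow> 'a) \<Rightarrow> nat list \<Rightarrow> 'a" where
  "composition_term a ns = scalar (1 / of_nat (suffix_denom ns)) * prod_list (map a ns)"

definition composition_sum :: "(nat \<Rightarrow> 'a) \<Rightarrow> nat \<Rightarrow> 'a" where
  "composition_sum a N = (\<Sum>ns\<in>compositions N. composition_term a ns)"

lemma composition_sum_0: "composition_sum a 0 = 1"
  by (simp add: composition_sum_def compositions_0 composition_term_def suffix_denom_def scalar_one)

lemma composition_term_Cons: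
  "composition_term a (n # ns) = scalar (1 / of_nat (n + sum_list ns)) * (a n * composition_term a ns)"
proof -
  have "composition_term a (n # ns)
      = (scalar (1 / of_nat (n + sum_list ns)) * scalar (1 / of_nat (suffix_denom ns))) * (a n * prod_list (map a ns))"
    unfolding composition_term_def suffix_denom_Cons by (simp flip: scalar_mult)
  then show ?thesis
    unfolding composition_term_def by (metis mult.assoc scalar_commute)
qed

lemma composition_sum_recursion:
  assumes "N \<noteq> 0"
  shows "of_nat N * composition_sum a N = (\<Sum>n=1..N. a n * composition_sum a (N - n))"
proof -
  have "composition_sum a N = (\<Sum>n=1..N. \<Sum>ns\<in>compositions (N - n). composition_term a (n # ns))"
    unfolding composition_sum_def compositions_eq_UN_Cons[OF assms]
    by (subst sum.UNION_disjoint) (auto simp: finite_compositions sum.reindex)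
  also have "\<dots> = scalar (1 / of_nat N) * (\<Sum>n=1..N. a n * composition_sum a (N - n))"
    by (auto simp: composition_term_Cons compositions_def composition_sum_def sum_distrib_left
        intro!: sum.cong)
  finally show ?thesis
    using of_nat_mult_scalar_inverse[OF assms] by (simp flip: mult.assoc)
qed

lemma eq_composition_sum_if_recursion:
  assumes "f 0 = 1"
    and "\<And>N. N \<noteq> 0 \<Longrightarrow> of_nat N * f N = (\<Sum>n=1..N. a n * f (N - n))"
  shows "f N = composition_sum a N"
proof (induction N rule: less_induct)
  case (less N)
  show ?case
  proof (cases "N = 0")
    case True
    then show ?thesis using assms(1) composition_sum_0 by simp
  next
    case False
    have "of_nat N * f N = (\<Sum>n=1..N. a n * composition_sum a (N - n))"
      using assms(2)[OF False] less False by (auto intro: sum.cong)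
    also have "\<dots> = of_nat N * composition_sum a N"
      using composition_sum_recursion[OF False] by simp
    finally show ?thesis
      by (rule of_nat_mult_left_cancel[OF False])
  qed
qed

definition Dterm_coeff :: "'a \<Rightarrow> 'a \<Rightarrow> nat \<Rightarrow> 'a" where
  "Dterm_coeff X Y n = ad_exp_coeff X (X + Y) (n - 1)"

lemma fps_nth_exp_alg_mult:
  "(fps_exp_alg scale X * fps_exp_alg scale Y) $ N
     = composition_sum (Dterm_coeff X Y) N"
proof (rule eq_composition_sum_if_recursion)
  let ?F = "fps_exp_alg scale X * fps_exp_alg scale Y"
  show "?F $ 0 = 1"
    by (simp add: fps_nth_exp_alg scalar_one)
  fix N :: nat
  assume "N \<noteq> 0"
  then obtain M where N: "N = Suc M"
    using not0_implies_Suc by blast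
  have "of_nat N * ?F $ N = fps_deriv ?F $ M"
    by (simp add: N del: fps_deriv_mult)
  also have "\<dots> = (ad_exp_series X (X + Y) * ?F) $ M"
    by (simp only: fps_deriv_exp_alg_mult)
  also have "\<dots> = (\<Sum>i=0..M. ad_exp_coeff X (X + Y) i * ?F $ (M - i))"
    by (simp add: fps_mult_nth ad_exp_series_def)
  also have "\<dots> = (\<Sum>n=1..N. Dterm_coeff X Y n * ?F $ (N - n))"
    by (simp only: N One_nat_def sum.shift_bounds_cl_Suc_ivl) (simp add: Dterm_coeff_def)
  finally show "of_nat N * ?F $ N = (\<Sum>n=1..N. Dterm_coeff X Y n * ?F $ (N - n))" .
qed

lemma Dterm_eq_monomial:
  "Dterm scale X Y = (\<lambda>n. fps_const (Dterm_coeff X Y n) * fps_X ^ n)"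
  by (simp add: fun_eq_iff Dterm_def Dterm_coeff_def ad_exp_coeff_def scale_eq_scalar_mult)

lemma fps_nth_bch_term:
  "bch_term scale X Y ns $ N
     = (if sum_list ns = N then composition_term (Dterm_coeff X Y) ns else 0)"
  by (simp add: bch_term_def fps_scale_def Dterm_eq_monomial prod_list_map_monomial
      composition_term_def scale_eq_scalar_mult)

lemma bch_term_support:
  "ns \<in> pos_tuples \<Longrightarrow> bch_term scale X Y ns $ N \<noteq> 0 \<Longrightarrow> ns \<in> compositions N"
  by (auto simp: fps_nth_bch_term pos_tuples_def compositions_def split: if_splits)

lemma tadic_summable_bch_term: "tadic_summable (bch_term scale X Y) pos_tuples"
  using bch_term_support by (intro tadic_summableI[of _ _ compositions] finite_compositions) blast

lemma fps_nth_tadic_sum_bch_term: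
  "tadic_sum (bch_term scale X Y) pos_tuples $ N
     = (if N = 0 then 0 else composition_sum (Dterm_coeff X Y) N)"
proof -
  have "tadic_sum (bch_term scale X Y) pos_tuples $ N
      = (\<Sum>ns\<in>pos_tuples \<inter> compositions N. bch_term scale X Y ns $ N)"
    by (rule fps_nth_tadic_sum) (auto intro: finite_compositions bch_term_support)
  also have "\<dots> = (\<Sum>ns\<in>pos_tuples \<inter> compositions N. composition_term (Dterm_coeff X Y) ns)"
    by (rule sum.cong) (auto simp: fps_nth_bch_term compositions_def)
  finally show ?thesis
    by (simp add: pos_tuples_Int_compositions composition_sum_def)
qed

end

theorem theorem4p1:
  fixes scale :: "'k::field_char_0 \<Rightarrow> 'a::ring_1 \<Rightarrow> 'a"
    and X Y :: 'a
  assumes "algebra_over scale"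
  shows "tadic_summable (bch_term scale X Y) pos_tuples \<and>
         fps_exp_alg scale X * fps_exp_alg scale Y
           = 1 + tadic_sum (bch_term scale X Y) pos_tuples"
proof -
  interpret scalar_algebra scale
    by unfold_locales (fact assms)
  have "fps_exp_alg scale X * fps_exp_alg scale Y = 1 + tadic_sum (bch_term scale X Y) pos_tuples"
    by (simp add: fps_eq_iff fps_nth_exp_alg_mult fps_nth_tadic_sum_bch_term composition_sum_0)
  with tadic_summable_bch_term show ?thesis ..
qed

end
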